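(* Let $\mathcal A$ be a transitive Lie algebroid over $M$ with kernel $\mathcal L$. For every triple $(g,h,\nabla)$ where $g$ is a (possibly degenerate) metric on $M$, $h$ is a non-degenerate inner metric on $\mathcal L$ and $\nabla$ is an ordinary connection on $\mathcal A$ with connection 1-form $\omega$, the formula $$\widehat g(X,Y)=g(\rho(X),\rho(Y))+h(\omega(X),\omega(Y)),\qquad X,Y\in\mathcal A,$$ defines an inner non-degenerate metric on $\mathcal A$; and every inner non-degenerate metric $\widehat g$ on $\mathcal A$ arises in this way from exactly one such triple (so that inner non-degenerate metrics on $\mathcal A$ are equivalent to such triples).
   Context: A transitive Lie algebroid over $M$ is a finitely generated projective $C^\infty(M)$-module $\mathcal A$ with Lie bracket and surjective $C^\infty(M)$-linear Lie morphism $\rho:\mathcal A\to\Gamma(TM)$ with $[X,fY]=f[X,Y]+(\rho(X)f)Y$; its kernel $\mathcal L=\ker\rho=\Gamma(\mathbb L)$ for a locally trivial Lie algebra bundle $\mathbb L$; $\iota:\mathcal L\to\mathcal A$ is the inclusion. An inner metric on $\mathcal L$ is a metric $h$ on the vector bundle $\mathbb L$ (a symmetric $C^\infty(M)$-bilinear map $\mathcal L\otimes\mathcal L\to C^\infty(M)$). A metric on $\mathcal A$ is a symmetric $C^\infty(M)$-bilinear map $\widehat g:\mathcal A\otimes\mathcal A\to C^\infty(M)$; it is inner non-degenerate if $\iota^*\widehat g$, $(\gamma,\eta)\mapsto\widehat g(\iota\gamma,\iota\eta)$, is non-degenerate on $\mathbb L$. An ordinary connection is a $C^\infty(M)$-linear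 $\nabla:\Gamma(TM)\to\mathcal A$ with $\rho\circ\nabla=\mathrm{id}$; its connection 1-form $\omega:\mathcal A\to\mathcal L$ is defined by $X=\nabla_{\rho(X)}-\iota(\omega(X))$. *)

theory Defs
  imports "HOL-Analysis.Analysis"
begin

text \<open>The ring of smooth functions C-infinity(M) is modelled by an
  abstract commutative real algebra of type 'r; modules of sections are abelian groups
  with a scalar action (library locale module). Vector fields Gamma(TM) form a module
  of type 't with a bracket and an action on functions by derivations.\<close>

definition real_lie_algebra ::
  "('r::{comm_ring_1,real_algebra_1} \<Rightarrow> 'a::ab_group_add \<Rightarrow> 'a) \<Rightarrow> ('a \<Rightarrow> 'a \<Rightarrow> 'a) \<Rightarrow> bool" where
  "real_lie_algebra sc br \<longleftrightarrow>
     (\<forall>x y z. br (x + y) z = br x z + br y z) \<and>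
     (\<forall>c x y. br (sc (of_real c) x) y = sc (of_real c) (br x y)) \<and>
     (\<forall>x y. br x y = - br y x) \<and>
     (\<forall>x y z. br x (br y z) + br y (br z x) + br z (br x y) = 0)"

definition vector_field_structure ::
  "('r::{comm_ring_1,real_algebra_1} \<Rightarrow> 't::ab_group_add \<Rightarrow> 't) \<Rightarrow> ('t \<Rightarrow> 't \<Rightarrow> 't) \<Rightarrow> ('t \<Rightarrow> 'r \<Rightarrow> 'r) \<Rightarrow> bool" where
  "vector_field_structure sT brT act \<longleftrightarrow>
     module sT \<and> real_lie_algebra sT brT \<and>
     (\<forall>U f k. act U (f + k) = act U f + act U k) \<and>
     (\<forall>U f k. act U (f * k) = f * act U k + k * act U f) \<and>
     (\<forall>U c. act U (of_real c) = 0) \<and>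
     (\<forall>U V f. act (U + V) f = act U f + act V f) \<and>
     (\<forall>g U f. act (sT g U) f = g * act U f) \<and>
     (\<forall>U V f. act (brT U V) f = act U (act V f) - act V (act U f))"

definition fin_gen_projective :: "('r::comm_ring_1 \<Rightarrow> 'a::ab_group_add \<Rightarrow> 'a) \<Rightarrow> bool" where
  "fin_gen_projective sA \<longleftrightarrow>
     (\<exists>(n::nat) (e::nat \<Rightarrow> 'a) (\<phi>::nat \<Rightarrow> 'a \<Rightarrow> 'r).
        (\<forall>i<n. module_hom sA (\<lambda>r x. r * x) (\<phi> i)) \<and>
        (\<forall>X. X = (\<Sum>i<n. sA (\<phi> i X) (e i))))"

definition transitive_Lie_algebroid ::
  "('r::{comm_ring_1,real_algebra_1} \<Rightarrow> 'a::ab_group_add \<Rightarrow> 'a) \<Rightarrow> ('a \<Rightarrow> 'a \<Rightarrow> 'a) \<Rightarrow>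
   ('r \<Rightarrow> 't::ab_group_add \<Rightarrow> 't) \<Rightarrow> ('t \<Rightarrow> 't \<Rightarrow> 't) \<Rightarrow> ('t \<Rightarrow> 'r \<Rightarrow> 'r) \<Rightarrow>
   ('a \<Rightarrow> 't) \<Rightarrow> bool" where
  "transitive_Lie_algebroid sA brA sT brT act \<rho> \<longleftrightarrow>
     module sA \<and> fin_gen_projective sA \<and> real_lie_algebra sA brA \<and>
     vector_field_structure sT brT act \<and>
     module_hom sA sT \<rho> \<and> surj \<rho> \<and>
     (\<forall>X Y. \<rho> (brA X Y) = brT (\<rho> X) (\<rho> Y)) \<and>
     (\<forall>X f Y. brA X (sA f Y) = sA f (brA X Y) + sA (act (\<rho> X) f) Y)"

definition kernel_inclusion ::
  "('r::comm_ring_1 \<Rightarrow> 'l::ab_group_add \<Rightarrow> 'l) \<Rightarrow> ('r \<Rightarrow> 'a::ab_group_add \<Rightarrow> 'a) \<Rightarrow>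
   ('l \<Rightarrow> 'a) \<Rightarrow> ('a \<Rightarrow> 't::ab_group_add) \<Rightarrow> bool" where
  "kernel_inclusion sL sA \<iota> \<rho> \<longleftrightarrow>
     module_hom sL sA \<iota> \<and> inj \<iota> \<and> range \<iota> = {X. \<rho> X = 0}"

definition metric :: "('r::comm_ring_1 \<Rightarrow> 'a::ab_group_add \<Rightarrow> 'a) \<Rightarrow> ('a \<Rightarrow> 'a \<Rightarrow> 'r) \<Rightarrow> bool" where
  "metric sA g \<longleftrightarrow>
     (\<forall>X Y. g X Y = g Y X) \<and>
     (\<forall>X Y Z. g (X + Y) Z = g X Z + g Y Z) \<and>
     (\<forall>f X Y. g (sA f X) Y = f * g X Y)"

text \<open>Non-degeneracy of a metric on the bundle: the musical map gamma |-> h(gamma,-) is an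
  isomorphism from the module of sections onto its dual module.\<close>
definition nondegenerate :: "('r::comm_ring_1 \<Rightarrow> 'l::ab_group_add \<Rightarrow> 'l) \<Rightarrow> ('l \<Rightarrow> 'l \<Rightarrow> 'r) \<Rightarrow> bool" where
  "nondegenerate sL h \<longleftrightarrow>
     (\<forall>\<gamma>. (\<forall>\<eta>. h \<gamma> \<eta> = 0) \<longrightarrow> \<gamma> = 0) \<and>
     (\<forall>\<phi>. module_hom sL (\<lambda>r x. r * x) \<phi> \<longrightarrow> (\<exists>\<gamma>. \<forall>\<eta>. h \<gamma> \<eta> = \<phi> \<eta>))"

definition inner_nondegenerate ::
  "('r::comm_ring_1 \<Rightarrow> 'l::ab_group_add \<Rightarrow> 'l) \<Rightarrow> ('l \<Rightarrow> 'a) \<Rightarrow> ('a \<Rightarrow> 'a \<Rightarrow> 'r) \<Rightarrow> bool" where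
  "inner_nondegenerate sL \<iota> gh \<longleftrightarrow> nondegenerate sL (\<lambda>\<gamma> \<eta>. gh (\<iota> \<gamma>) (\<iota> \<eta>))"

definition ordinary_connection ::
  "('r::comm_ring_1 \<Rightarrow> 't::ab_group_add \<Rightarrow> 't) \<Rightarrow> ('r \<Rightarrow> 'a::ab_group_add \<Rightarrow> 'a) \<Rightarrow>
   ('a \<Rightarrow> 't) \<Rightarrow> ('t \<Rightarrow> 'a) \<Rightarrow> bool" where
  "ordinary_connection sT sA \<rho> nab \<longleftrightarrow> module_hom sT sA nab \<and> (\<forall>U. \<rho> (nab U) = U)"

definition connection_form :: "('l \<Rightarrow> 'a::ab_group_add) \<Rightarrow> ('a \<Rightarrow> 't) \<Rightarrow> ('t \<Rightarrow> 'a) \<Rightarrow> 'a \<Rightarrow> 'l" where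
  "connection_form \<iota> \<rho> nab X = (THE \<gamma>. X = nab (\<rho> X) - \<iota> \<gamma>)"

definition induced_metric ::
  "('l \<Rightarrow> 'a::ab_group_add) \<Rightarrow> ('a \<Rightarrow> 't) \<Rightarrow> ('t \<Rightarrow> 't \<Rightarrow> 'r::comm_ring_1) \<Rightarrow> ('l \<Rightarrow> 'l \<Rightarrow> 'r) \<Rightarrow>
   ('t \<Rightarrow> 'a) \<Rightarrow> 'a \<Rightarrow> 'a \<Rightarrow> 'r" where
  "induced_metric \<iota> \<rho> g h nab X Y =
     g (\<rho> X) (\<rho> Y) + h (connection_form \<iota> \<rho> nab X) (connection_form \<iota> \<rho> nab Y)"

end

theory Submission
  imports Defs
begin

text \<open>An ordinary connection splits \<open>\<A>\<close> as \<open>\<nabla>(\<Gamma>(TM)) \<oplus> \<iota>(\<L>)\<close>, and \<open>-\<omega>\<close> is the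
  projection onto the second summand. The metric built from \<open>(g, h, \<nabla>)\<close> makes the summands
  orthogonal, restricts to \<open>h\<close> on \<open>\<L>\<close> and to \<open>g\<close> along \<open>\<nabla>\<close>. Conversely, inner
  non-degeneracy of \<open>gh\<close> lets one correct any lift \<open>X\<close> of a vector field by the vertical
  vector representing \<open>gh(X, \<iota> -)\<close>, which yields the unique lift orthogonal to \<open>\<iota>(\<L>)\<close>.
  These horizontal lifts form the connection, and \<open>h\<close> and \<open>g\<close> are the restrictions of
  \<open>gh\<close> to \<open>\<L>\<close> and along the connection; every triple inducing \<open>gh\<close> has a connection
  orthogonal to \<open>\<iota>(\<L>)\<close>, whence uniqueness.\<close>

lemma metric_commute: "metric s g \<Longrightarrow> g X Y = g Y X"
  unfolding metric_def by blast

lemma metric_add_left: "metric s g \<Longrightarrow> g (X + Y) Z = g X Z + g Y Z"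
  unfolding metric_def by blast

lemma metric_scale_left: "metric s g \<Longrightarrow> g (s f X) Y = f * g X Y"
  unfolding metric_def by blast

lemma metric_zero_left: "metric s g \<Longrightarrow> g 0 Y = 0"
  using metric_add_left[of s g 0 0 Y] by simp

lemma metric_zero_right: "metric s g \<Longrightarrow> g X 0 = 0"
  using metric_zero_left metric_commute by metis

lemma metric_minus_left: "metric s g \<Longrightarrow> g (- X) Y = - g X Y"
  using metric_add_left[of s g X "- X" Y] metric_zero_left[of s g Y]
  by (simp add: eq_neg_iff_add_eq_0 add.commute)

lemma metric_minus_right: "metric s g \<Longrightarrow> g X (- Y) = - g X Y"
  using metric_minus_left metric_commute by metis

lemma metric_diff_left: "metric s g \<Longrightarrow> g (X - Y) Z = g X Z - g Y Z"
  using metric_add_left[of s g X "- Y" Z] metric_minus_left[of s g Y Z] by simp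

lemma metric_diff_right: "metric s g \<Longrightarrow> g Z (X - Y) = g Z X - g Z Y"
  using metric_diff_left metric_commute by metis

lemma metric_pullback:
  assumes "metric sA g" and "module_hom sB sA f"
  shows "metric sB (\<lambda>x y. g (f x) (f y))"
  unfolding metric_def
proof (intro conjI allI)
  fix x y z c
  show "g (f x) (f y) = g (f y) (f x)"
    using metric_commute[OF assms(1)] .
  show "g (f (x + y)) (f z) = g (f x) (f z) + g (f y) (f z)"
    using metric_add_left[OF assms(1)] module_hom.add[OF assms(2)] by simp
  show "g (f (sB c x)) (f y) = c * g (f x) (f y)"
    using metric_scale_left[OF assms(1)] module_hom.scale[OF assms(2)] by simp
qed

lemma module_hom_metric_right:
  fixes sA :: "'r::comm_ring_1 \<Rightarrow> 'a::ab_group_add \<Rightarrow> 'a"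
  assumes g: "metric sA g" and f: "module_hom sB sA f"
  shows "module_hom sB (*) (\<lambda>y. g X (f y))"
proof -
  have "module ((*) :: 'r \<Rightarrow> 'r \<Rightarrow> 'r)"
    by unfold_locales (simp_all add: algebra_simps)
  then show ?thesis
    using f metric_commute[OF g] metric_add_left[OF g] metric_scale_left[OF g]
    by (simp add: module_hom_iff)
qed

context
  fixes sL :: "'r::comm_ring_1 \<Rightarrow> 'l::ab_group_add \<Rightarrow> 'l"
    and sA :: "'r \<Rightarrow> 'a::ab_group_add \<Rightarrow> 'a"
    and sT :: "'r \<Rightarrow> 't::ab_group_add \<Rightarrow> 't"
    and \<iota> :: "'l \<Rightarrow> 'a" and \<rho> :: "'a \<Rightarrow> 't" and nab :: "'t \<Rightarrow> 'a"
  assumes kernel: "kernel_inclusion sL sA \<iota> \<rho>"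
    and rho_hom: "module_hom sA sT \<rho>"
    and conn: "ordinary_connection sT sA \<rho> nab"
begin

lemma connection_form_eqI:
  assumes "\<iota> \<gamma> = nab (\<rho> X) - X"
  shows "connection_form \<iota> \<rho> nab X = \<gamma>"
  unfolding connection_form_def
proof (rule the_equality)
  show "X = nab (\<rho> X) - \<iota> \<gamma>"
    using assms by simp
  fix \<delta> assume "X = nab (\<rho> X) - \<iota> \<delta>"
  then have "\<iota> \<delta> = \<iota> \<gamma>"
    using assms by (metis add_diff_cancel_left' diff_add_cancel)
  then show "\<delta> = \<gamma>"
    using kernel by (simp add: kernel_inclusion_def inj_eq)
qed

lemma connection_form_eq: "\<iota> (connection_form \<iota> \<rho> nab X) = nab (\<rho> X) - X"
proof -
  have "\<rho> (nab (\<rho> X) - X) = 0"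
    using conn module_hom.diff[OF rho_hom] by (simp add: ordinary_connection_def)
  then obtain \<gamma> where "\<iota> \<gamma> = nab (\<rho> X) - X"
    using kernel unfolding kernel_inclusion_def by (metis (mono_tags) mem_Collect_eq rangeE)
  then show ?thesis
    using connection_form_eqI by simp
qed

lemma connection_form_add:
  "connection_form \<iota> \<rho> nab (X + Y) = connection_form \<iota> \<rho> nab X + connection_form \<iota> \<rho> nab Y"
proof (rule connection_form_eqI)
  have nab_hom: "module_hom sT sA nab" and iota_hom: "module_hom sL sA \<iota>"
    using conn kernel by (auto simp: ordinary_connection_def kernel_inclusion_def)
  have "\<iota> (connection_form \<iota> \<rho> nab X + connection_form \<iota> \<rho> nab Y) =
      (nab (\<rho> X) - X) + (nab (\<rho> Y) - Y)"
    by (simp add: module_hom.add[OF iota_hom] connection_form_eq)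
  also have "\<dots> = nab (\<rho> (X + Y)) - (X + Y)"
    by (simp add: module_hom.add[OF rho_hom] module_hom.add[OF nab_hom] algebra_simps)
  finally show "\<iota> (connection_form \<iota> \<rho> nab X + connection_form \<iota> \<rho> nab Y) =
      nab (\<rho> (X + Y)) - (X + Y)" .
qed

lemma connection_form_scale:
  "connection_form \<iota> \<rho> nab (sA f X) = sL f (connection_form \<iota> \<rho> nab X)"
proof (rule connection_form_eqI)
  have nab_hom: "module_hom sT sA nab" and iota_hom: "module_hom sL sA \<iota>"
    using conn kernel by (auto simp: ordinary_connection_def kernel_inclusion_def)
  have "\<iota> (sL f (connection_form \<iota> \<rho> nab X)) = sA f (nab (\<rho> X) - X)"
    using connection_form_eq module_hom.scale[OF iota_hom] by simp
  also have "\<dots> = nab (\<rho> (sA f X)) - sA f X"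
    using module_hom.scale[OF rho_hom] module_hom.scale[OF nab_hom]
      module.scale_right_diff_distrib[OF module_hom.axioms(2)[OF nab_hom]]
    by simp
  finally show "\<iota> (sL f (connection_form \<iota> \<rho> nab X)) = nab (\<rho> (sA f X)) - sA f X" .
qed

lemma connection_form_kernel: "connection_form \<iota> \<rho> nab (\<iota> \<gamma>) = - \<gamma>"
proof (rule connection_form_eqI)
  have "module_hom sT sA nab" and "module_hom sL sA \<iota>" and "\<rho> (\<iota> \<gamma>) = 0"
    using conn kernel by (auto simp: ordinary_connection_def kernel_inclusion_def)
  then show "\<iota> (- \<gamma>) = nab (\<rho> (\<iota> \<gamma>)) - \<iota> \<gamma>"
    by (simp add: module_hom.neg module_hom.zero)
qed

lemma connection_form_connection: "connection_form \<iota> \<rho> nab (nab U) = 0"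
proof (rule connection_form_eqI)
  have "module_hom sL sA \<iota>"
    using kernel by (simp add: kernel_inclusion_def)
  then show "\<iota> 0 = nab (\<rho> (nab U)) - nab U"
    using conn by (simp add: module_hom.zero ordinary_connection_def)
qed

context
  fixes g :: "'t \<Rightarrow> 't \<Rightarrow> 'r" and h :: "'l \<Rightarrow> 'l \<Rightarrow> 'r"
  assumes g: "metric sT g" and h: "metric sL h"
begin

lemma metric_induced_metric: "metric sA (induced_metric \<iota> \<rho> g h nab)"
  unfolding metric_def induced_metric_def
  using metric_commute[OF g] metric_commute[OF h] metric_add_left[OF g] metric_add_left[OF h]
    metric_scale_left[OF g] metric_scale_left[OF h] module_hom.add[OF rho_hom]
    module_hom.scale[OF rho_hom] connection_form_add connection_form_scale
  by (simp add: algebra_simps)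

lemma induced_metric_kernel: "induced_metric \<iota> \<rho> g h nab (\<iota> \<gamma>) (\<iota> \<eta>) = h \<gamma> \<eta>"
proof -
  have "\<rho> (\<iota> \<gamma>) = 0" "\<rho> (\<iota> \<eta>) = 0"
    using kernel by (auto simp: kernel_inclusion_def)
  then show ?thesis
    unfolding induced_metric_def
    using connection_form_kernel metric_zero_left[OF g] metric_minus_left[OF h]
      metric_minus_right[OF h]
    by simp
qed

lemma induced_metric_connection_kernel: "induced_metric \<iota> \<rho> g h nab (nab U) (\<iota> \<eta>) = 0"
proof -
  have "\<rho> (\<iota> \<eta>) = 0"
    using kernel by (auto simp: kernel_inclusion_def)
  then show ?thesis
    unfolding induced_metric_def
    using connection_form_connection metric_zero_right[OF g] metric_zero_left[OF h] by simp
qed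

lemma induced_metric_connection: "induced_metric \<iota> \<rho> g h nab (nab U) (nab V) = g U V"
  using conn connection_form_connection metric_zero_left[OF h]
  by (simp add: induced_metric_def ordinary_connection_def)

lemma inner_nondegenerate_induced_metric:
  "nondegenerate sL h \<Longrightarrow> inner_nondegenerate sL \<iota> (induced_metric \<iota> \<rho> g h nab)"
  unfolding inner_nondegenerate_def induced_metric_kernel by simp

end

end

definition kernel_orthogonal :: "('a \<Rightarrow> 'a \<Rightarrow> 'r::zero) \<Rightarrow> ('l \<Rightarrow> 'a) \<Rightarrow> 'a \<Rightarrow> bool" where
  "kernel_orthogonal gh \<iota> Y \<longleftrightarrow> (\<forall>\<eta>. gh Y (\<iota> \<eta>) = 0)"

definition horizontal_lift ::
  "('a \<Rightarrow> 'a \<Rightarrow> 'r::zero) \<Rightarrow> ('l \<Rightarrow> 'a) \<Rightarrow> ('a \<Rightarrow> 't) \<Rightarrow> 't \<Rightarrow> 'a" where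
  "horizontal_lift gh \<iota> \<rho> U = (THE Y. \<rho> Y = U \<and> kernel_orthogonal gh \<iota> Y)"

context
  fixes sL :: "'r::comm_ring_1 \<Rightarrow> 'l::ab_group_add \<Rightarrow> 'l"
    and sA :: "'r \<Rightarrow> 'a::ab_group_add \<Rightarrow> 'a"
    and sT :: "'r \<Rightarrow> 't::ab_group_add \<Rightarrow> 't"
    and \<iota> :: "'l \<Rightarrow> 'a" and \<rho> :: "'a \<Rightarrow> 't" and gh :: "'a \<Rightarrow> 'a \<Rightarrow> 'r"
  assumes kernel: "kernel_inclusion sL sA \<iota> \<rho>"
    and rho_hom: "module_hom sA sT \<rho>"
    and rho_surj: "surj \<rho>"
    and gh: "metric sA gh"
    and inner: "inner_nondegenerate sL \<iota> gh"
begin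

lemma ex1_kernel_orthogonal_lift: "\<exists>!Y. \<rho> Y = U \<and> kernel_orthogonal gh \<iota> Y"
proof -
  have iota_hom: "module_hom sL sA \<iota>" and ker: "range \<iota> = {X. \<rho> X = 0}"
    using kernel by (auto simp: kernel_inclusion_def)
  have nd: "nondegenerate sL (\<lambda>\<gamma> \<eta>. gh (\<iota> \<gamma>) (\<iota> \<eta>))"
    using inner by (simp add: inner_nondegenerate_def)
  obtain X where X: "\<rho> X = U"
    using rho_surj by (metis surjD)
  then obtain \<gamma> where \<gamma>: "\<forall>\<eta>. gh (\<iota> \<gamma>) (\<iota> \<eta>) = gh X (\<iota> \<eta>)"
    using nd module_hom_metric_right[OF gh iota_hom] unfolding nondegenerate_def by blast
  have "\<rho> (\<iota> \<gamma>) = 0"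
    using ker by auto
  then have "\<rho> (X - \<iota> \<gamma>) = U \<and> kernel_orthogonal gh \<iota> (X - \<iota> \<gamma>)"
    using X \<gamma> module_hom.diff[OF rho_hom] metric_diff_left[OF gh]
    by (simp add: kernel_orthogonal_def)
  moreover have "Y = Y'"
    if "\<rho> Y = U \<and> kernel_orthogonal gh \<iota> Y" "\<rho> Y' = U \<and> kernel_orthogonal gh \<iota> Y'" for Y Y'
  proof -
    have "\<rho> (Y - Y') = 0"
      using that module_hom.diff[OF rho_hom] by simp
    then obtain \<delta> where \<delta>: "\<iota> \<delta> = Y - Y'"
      using ker by (metis (mono_tags) mem_Collect_eq rangeE)
    then have "\<forall>\<eta>. gh (\<iota> \<delta>) (\<iota> \<eta>) = 0"
      using that metric_diff_left[OF gh] by (simp add: kernel_orthogonal_def)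
    then have "\<delta> = 0"
      using nd unfolding nondegenerate_def by blast
    then show ?thesis
      using \<delta> module_hom.zero[OF iota_hom] by simp
  qed
  ultimately show ?thesis
    by blast
qed

lemma horizontal_lift:
  "\<rho> (horizontal_lift gh \<iota> \<rho> U) = U" "kernel_orthogonal gh \<iota> (horizontal_lift gh \<iota> \<rho> U)"
  unfolding horizontal_lift_def using theI'[OF ex1_kernel_orthogonal_lift] by blast+

lemma horizontal_lift_eqI:
  "\<rho> Y = U \<Longrightarrow> kernel_orthogonal gh \<iota> Y \<Longrightarrow> horizontal_lift gh \<iota> \<rho> U = Y"
  unfolding horizontal_lift_def using ex1_kernel_orthogonal_lift by blast

lemma ordinary_connection_horizontal_lift: "ordinary_connection sT sA \<rho> (horizontal_lift gh \<iota> \<rho>)"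
proof -
  have "module sA" "module sT"
    using rho_hom by (auto simp: module_hom_def)
  moreover have "horizontal_lift gh \<iota> \<rho> (U + V) = horizontal_lift gh \<iota> \<rho> U + horizontal_lift gh \<iota> \<rho> V"
    for U V
    using horizontal_lift[of U] horizontal_lift[of V] module_hom.add[OF rho_hom] metric_add_left[OF gh]
    by (intro horizontal_lift_eqI) (auto simp: kernel_orthogonal_def)
  moreover have "horizontal_lift gh \<iota> \<rho> (sT f U) = sA f (horizontal_lift gh \<iota> \<rho> U)" for f U
    using horizontal_lift[of U] module_hom.scale[OF rho_hom] metric_scale_left[OF gh]
    by (intro horizontal_lift_eqI) (auto simp: kernel_orthogonal_def)
  ultimately show ?thesis
    using horizontal_lift(1) by (simp add: ordinary_connection_def module_hom_iff)
qed

lemma eq_induced_metric_horizontal_lift: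
  "gh = induced_metric \<iota> \<rho> (\<lambda>U V. gh (horizontal_lift gh \<iota> \<rho> U) (horizontal_lift gh \<iota> \<rho> V))
          (\<lambda>\<gamma> \<eta>. gh (\<iota> \<gamma>) (\<iota> \<eta>)) (horizontal_lift gh \<iota> \<rho>)"
proof (intro ext)
  fix X Y
  let ?nab = "horizontal_lift gh \<iota> \<rho>" and ?\<omega> = "connection_form \<iota> \<rho> (horizontal_lift gh \<iota> \<rho>)"
  have split: "Z = ?nab (\<rho> Z) - \<iota> (?\<omega> Z)" for Z
    using connection_form_eq[OF kernel rho_hom ordinary_connection_horizontal_lift] by simp
  have orth: "gh (?nab U) (\<iota> \<gamma>) = 0" "gh (\<iota> \<gamma>) (?nab U) = 0" for U \<gamma>
    using horizontal_lift(2) metric_commute[OF gh] by (metis kernel_orthogonal_def)+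
  have "gh X Y = gh (?nab (\<rho> X) - \<iota> (?\<omega> X)) (?nab (\<rho> Y) - \<iota> (?\<omega> Y))"
    by (rule arg_cong2[where f = gh]) (rule split)+
  also have "\<dots> = gh (?nab (\<rho> X)) (?nab (\<rho> Y)) + gh (\<iota> (?\<omega> X)) (\<iota> (?\<omega> Y))"
    using metric_diff_left[OF gh] metric_diff_right[OF gh] orth by simp
  finally show "gh X Y = induced_metric \<iota> \<rho> (\<lambda>U V. gh (?nab U) (?nab V)) (\<lambda>\<gamma> \<eta>. gh (\<iota> \<gamma>) (\<iota> \<eta>)) ?nab X Y"
    by (simp add: induced_metric_def)
qed

lemma induced_metric_determines:
  assumes g: "metric sT g" and h: "metric sL h" and conn: "ordinary_connection sT sA \<rho> nab"
    and gh_eq: "gh = induced_metric \<iota> \<rho> g h nab"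
  shows "nab = horizontal_lift gh \<iota> \<rho>"
    and "h = (\<lambda>\<gamma> \<eta>. gh (\<iota> \<gamma>) (\<iota> \<eta>))"
    and "g = (\<lambda>U V. gh (nab U) (nab V))"
proof -
  show "nab = horizontal_lift gh \<iota> \<rho>"
  proof
    fix U
    have "\<rho> (nab U) = U"
      using conn by (simp add: ordinary_connection_def)
    moreover have "kernel_orthogonal gh \<iota> (nab U)"
      unfolding kernel_orthogonal_def gh_eq
      using induced_metric_connection_kernel[OF kernel rho_hom conn g h] by simp
    ultimately show "nab U = horizontal_lift gh \<iota> \<rho> U"
      using horizontal_lift_eqI by metis
  qed
  show "h = (\<lambda>\<gamma> \<eta>. gh (\<iota> \<gamma>) (\<iota> \<eta>))"
    unfolding gh_eq induced_metric_kernel[OF kernel rho_hom conn g h] ..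
  show "g = (\<lambda>U V. gh (nab U) (nab V))"
    unfolding gh_eq induced_metric_connection[OF kernel rho_hom conn g h] ..
qed

lemma ex1_triple_induces_metric:
  "\<exists>!(g, h, nab). metric sT g \<and> metric sL h \<and> nondegenerate sL h \<and>
     ordinary_connection sT sA \<rho> nab \<and> gh = induced_metric \<iota> \<rho> g h nab"
proof -
  let ?nab = "horizontal_lift gh \<iota> \<rho>"
  let ?g = "\<lambda>U V. gh (?nab U) (?nab V)" and ?h = "\<lambda>\<gamma> \<eta>. gh (\<iota> \<gamma>) (\<iota> \<eta>)"
  have nab_hom: "module_hom sT sA ?nab" and iota_hom: "module_hom sL sA \<iota>"
    using ordinary_connection_horizontal_lift kernel
    by (auto simp: ordinary_connection_def kernel_inclusion_def)
  have exist: "metric sT ?g \<and> metric sL ?h \<and> nondegenerate sL ?h \<and>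
      ordinary_connection sT sA \<rho> ?nab \<and> gh = induced_metric \<iota> \<rho> ?g ?h ?nab"
    using metric_pullback[OF gh nab_hom] metric_pullback[OF gh iota_hom]
      ordinary_connection_horizontal_lift inner[unfolded inner_nondegenerate_def]
      eq_induced_metric_horizontal_lift
    by (intro conjI)
  have unique: "x = (?g, ?h, ?nab)"
    if "case x of (g, h, nab) \<Rightarrow> metric sT g \<and> metric sL h \<and> nondegenerate sL h \<and>
          ordinary_connection sT sA \<rho> nab \<and> gh = induced_metric \<iota> \<rho> g h nab" for x
  proof -
    obtain g h nab where x: "x = (g, h, nab)"
      by (cases x)
    from that have "metric sT g" and "metric sL h" and "ordinary_connection sT sA \<rho> nab"
      and "gh = induced_metric \<iota> \<rho> g h nab"
      unfolding x case_prod_conv by blast+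
    from induced_metric_determines[OF this] show ?thesis
      unfolding x by simp
  qed
  show ?thesis
    by (rule ex1I[of _ "(?g, ?h, ?nab)"]) (unfold case_prod_conv, rule exist, erule unique)
qed

end

theorem proposition2p7:
  fixes sA :: "'r::{comm_ring_1,real_algebra_1} \<Rightarrow> 'a::ab_group_add \<Rightarrow> 'a"
    and brA :: "'a \<Rightarrow> 'a \<Rightarrow> 'a"
    and sT :: "'r \<Rightarrow> 't::ab_group_add \<Rightarrow> 't"
    and brT :: "'t \<Rightarrow> 't \<Rightarrow> 't"
    and act :: "'t \<Rightarrow> 'r \<Rightarrow> 'r"
    and \<rho> :: "'a \<Rightarrow> 't"
    and sL :: "'r \<Rightarrow> 'l::ab_group_add \<Rightarrow> 'l"
    and \<iota> :: "'l \<Rightarrow> 'a"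
  assumes "transitive_Lie_algebroid sA brA sT brT act \<rho>"
    and "kernel_inclusion sL sA \<iota> \<rho>"
  shows "(\<forall>g h nab. metric sT g \<and> metric sL h \<and> nondegenerate sL h \<and>
            ordinary_connection sT sA \<rho> nab \<longrightarrow>
            metric sA (induced_metric \<iota> \<rho> g h nab) \<and>
            inner_nondegenerate sL \<iota> (induced_metric \<iota> \<rho> g h nab)) \<and>
         (\<forall>gh. metric sA gh \<and> inner_nondegenerate sL \<iota> gh \<longrightarrow>
            (\<exists>!(g, h, nab). metric sT g \<and> metric sL h \<and> nondegenerate sL h \<and>
               ordinary_connection sT sA \<rho> nab \<and> gh = induced_metric \<iota> \<rho> g h nab))"
proof -
  have rho_hom: "module_hom sA sT \<rho>" and rho_surj: "surj \<rho>"
    using assms(1) by (auto simp: transitive_Lie_algebroid_def)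
  note kernel = assms(2)
  show ?thesis
  proof (intro conjI allI impI; elim conjE)
    fix g h nab
    assume "metric sT g" "metric sL h" "nondegenerate sL h" "ordinary_connection sT sA \<rho> nab"
    then show "metric sA (induced_metric \<iota> \<rho> g h nab)"
      and "inner_nondegenerate sL \<iota> (induced_metric \<iota> \<rho> g h nab)"
      using metric_induced_metric[OF kernel rho_hom] inner_nondegenerate_induced_metric[OF kernel rho_hom]
      by simp_all
  next
    fix gh assume "metric sA gh" "inner_nondegenerate sL \<iota> gh"
    then show "\<exists>!(g, h, nab). metric sT g \<and> metric sL h \<and> nondegenerate sL h \<and>
        ordinary_connection sT sA \<rho> nab \<and> gh = induced_metric \<iota> \<rho> g h nab"
      by (rule ex1_triple_induces_metric[OF kernel rho_hom rho_surj])
  qed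
qed

end
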